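(* Let $q$ be a prime power and $m$ a positive integer with $\gcd(m,q)=1$, and let $R=\mathbb{F}_q[x]/\langle x^m-1\rangle$. Let $C$ and $D$ be one-generator quasi-cyclic codes of length $2m$ and index $2$ over $\mathbb{F}_q$, i.e. $C$ is the $R$-submodule of $R^2$ generated by $(g_{11}(x),g_{12}(x))$ and $D$ is the $R$-submodule generated by $(f_{11}(x),f_{12}(x))$, where $g_{11}(x)\mid x^m-1$ and $f_{11}(x)\mid x^m-1$. Then $(C,D)$ is a linear complementary pair of codes if and only if all of the following hold: (A) $\gcd(g_{11}(x),g_{12}(x))=1$; (B) $\gcd(f_{11}(x),f_{12}(x))=1$; (C) $\gcd\big(x^m-1,\,g_{11}(x)f_{12}(x)-g_{12}(x)f_{11}(x)\big)=1$.
   Context: A pair $(C,D)$ of $\mathbb{F}_q$-linear codes of the same length $n$ is a linear complementary pair (LCP) of codes if $C\cap D=\{0\}$ and $C+D=\mathbb{F}_q^n$. A quasi-cyclic code of length $2m$ and index $2$ is identified with an $R$-submodule of $R^2$ via $(c_{0,0},c_{0,1},c_{1,0},c_{1,1},\dots,c_{m-1,0},c_{m-1,1})\mapsto(c_0(x),c_1(x))$ with $c_j(x)=\sum_{i=0}^{m-1}c_{i,j}x^i$; elements of $R$ are represented by polynomials in $\mathbb{F}_q[x]$. *)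

theory Defs
  imports "HOL-Computational_Algebra.Computational_Algebra"
begin

definition xm1 :: "nat \<Rightarrow> 'a::field poly" where
  "xm1 m = monom 1 m - 1"

text \<open>Elements of R = F_q[x]/(x^m-1) are represented by their canonical
  representatives (polynomials of degree < m, i.e. remainders mod x^m-1).\<close>
definition ambient :: "nat \<Rightarrow> ('a::field poly \<times> 'a poly) set" where
  "ambient m = {(c0, c1). c0 mod xm1 m = c0 \<and> c1 mod xm1 m = c1}"

definition qc_code :: "nat \<Rightarrow> 'a::field poly \<Rightarrow> 'a poly \<Rightarrow> ('a poly \<times> 'a poly) set" where
  "qc_code m g1 g2 = {((r * g1) mod xm1 m, (r * g2) mod xm1 m) | r. True}"

definition is_LCP :: "nat \<Rightarrow> ('a::field poly \<times> 'a poly) set \<Rightarrow> ('a poly \<times> 'a poly) set \<Rightarrow> bool" where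
  "is_LCP m C D \<longleftrightarrow> C \<inter> D = {(0, 0)} \<and>
     {(c0 + d0, c1 + d1) | c0 c1 d0 d1. (c0, c1) \<in> C \<and> (d0, d1) \<in> D} = ambient m"

end

theory Submission
  imports Defs "HOL-Number_Theory.Cong"
begin

(* Over R = F[x]/(x^m - 1) the generators form the 2 x 2 matrix G with rows (g11, g12) and
   (f11, f12) and determinant \<Delta> = g11 f12 - g12 f11; C + D is the row space of G.
   If C + D = R^2, some matrix times G is the identity, so \<Delta> is a unit of R by
   multiplicativity of the determinant. Conversely, if \<Delta> is a unit, the adjugate of G
   gives C + D = R^2, and Cramer's rule turns r (g11, g12) = s (f11, f12) into r \<Delta> = 0,
   hence C \<inter> D = 0. Finally \<Delta> is a unit of R iff gcd(x^m - 1, \<Delta>) = 1, and a common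
   factor of g11 and g12 divides both x^m - 1 (as g11 does) and \<Delta>; likewise for f11, f12. *)

lemma euclidean_bezout:
  fixes a b :: "'a::euclidean_ring"
  shows "\<exists>d u v. d dvd a \<and> d dvd b \<and> u * a + v * b = d"
proof (induction b arbitrary: a rule: measure_induct_rule[of euclidean_size])
  case (less b)
  show ?case
  proof (cases "b = 0")
    case True
    then show ?thesis
      by (metis dvd_0_right dvd_refl mult_1 add_0_right)
  next
    case False
    then have "euclidean_size (a mod b) < euclidean_size b"
      by (rule mod_size_less)
    then obtain d u v where d: "d dvd b" "d dvd a mod b" and uv: "u * b + v * (a mod b) = d"
      using less by blast
    have "v * a + (u - v * (a div b)) * b = d"
      using uv by (simp add: minus_div_mult_eq_mod[symmetric] algebra_simps)
    moreover have "d dvd a"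
      using d by (metis div_mult_mod_eq dvd_add dvd_mult)
    ultimately show ?thesis
      using d by blast
  qed
qed

lemma coprime_iff_invertible:
  fixes a m :: "'a::unique_euclidean_ring"
  shows "coprime a m \<longleftrightarrow> (\<exists>x. [a * x = 1] (mod m))"
proof
  assume "coprime a m"
  obtain d u v where "d dvd a" "d dvd m" and uv: "u * a + v * m = d"
    using euclidean_bezout by blast
  with \<open>coprime a m\<close> have "d dvd 1"
    by (meson coprime_common_divisor)
  then obtain k where "1 = d * k"
    by (rule dvdE)
  then have "1 = (u * a + v * m) * k"
    using uv by simp
  then have "1 = a * (u * k) + m * (v * k)"
    by (simp add: algebra_simps)
  then show "\<exists>x. [a * x = 1] (mod m)"
    by (auto simp: cong_iff_lin)
next
  assume "\<exists>x. [a * x = 1] (mod m)"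
  then obtain x where "m dvd a * x - 1"
    by (auto simp: cong_iff_dvd_diff)
  show "coprime a m"
  proof (rule coprimeI)
    fix c assume "c dvd a" "c dvd m"
    then have "c dvd a * x - (a * x - 1)"
      using \<open>m dvd a * x - 1\<close> by (meson dvd_diff dvd_mult2 dvd_trans)
    then show "is_unit c"
      by simp
  qed
qed

lemma det2_mult:
  fixes r s r' s' g1 g2 f1 f2 :: "'a::comm_ring"
  shows "(r * s' - s * r') * (g1 * f2 - g2 * f1) =
    (r * g1 + s * f1) * (r' * g2 + s' * f2) - (r * g2 + s * f2) * (r' * g1 + s' * f1)"
  by (simp add: algebra_simps)

lemma cramer_cong:
  fixes r s g1 g2 f1 f2 M :: "'a::unique_euclidean_ring"
  assumes "[r * g1 = s * f1] (mod M)" and "[r * g2 = s * f2] (mod M)"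
  shows "[r * (g1 * f2 - g2 * f1) = 0] (mod M)"
proof -
  have "r * (g1 * f2 - g2 * f1) = f2 * (r * g1 - s * f1) - f1 * (r * g2 - s * f2)"
    by (simp add: algebra_simps)
  with assms show ?thesis
    by (simp add: cong_iff_dvd_diff)
qed

lemma coprime_rows_if_coprime_det:
  fixes g1 g2 f1 f2 M :: "'a::{comm_ring_1, algebraic_semidom}"
  assumes "coprime M (g1 * f2 - g2 * f1)"
  shows "g1 dvd M \<Longrightarrow> coprime g1 g2" and "f1 dvd M \<Longrightarrow> coprime f1 f2"
  using assms by (meson coprimeI coprime_common_divisor dvd_diff dvd_mult dvd_mult2 dvd_trans)+

definition code_sum :: "('a::plus \<times> 'a) set \<Rightarrow> ('a \<times> 'a) set \<Rightarrow> ('a \<times> 'a) set" where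
  "code_sum C D = {(c0 + d0, c1 + d1) | c0 c1 d0 d1. (c0, c1) \<in> C \<and> (d0, d1) \<in> D}"

lemma is_LCP_iff: "is_LCP m C D \<longleftrightarrow> C \<inter> D = {(0, 0)} \<and> code_sum C D = ambient m"
  by (simp add: is_LCP_def code_sum_def)

lemma mem_ambient_iff: "(c0, c1) \<in> ambient m \<longleftrightarrow> c0 mod xm1 m = c0 \<and> c1 mod xm1 m = c1"
  by (simp add: ambient_def)

lemma mem_qc_code_iff:
  "(a, b) \<in> qc_code m g1 g2 \<longleftrightarrow> (\<exists>r. a = (r * g1) mod xm1 m \<and> b = (r * g2) mod xm1 m)"
  by (auto simp: qc_code_def)

lemma mem_code_sum_qc_code_iff:
  "(c0, c1) \<in> code_sum (qc_code m g1 g2) (qc_code m f1 f2) \<longleftrightarrow>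
    (\<exists>r s. c0 = (r * g1 + s * f1) mod xm1 m \<and> c1 = (r * g2 + s * f2) mod xm1 m)"
  unfolding code_sum_def mem_qc_code_iff poly_mod_add_left by blast

lemma qc_code_inter_trivial:
  assumes "[(g1 * f2 - g2 * f1) * u = 1] (mod xm1 m)"
  shows "qc_code m g1 g2 \<inter> qc_code m f1 f2 = {(0, 0)}"
proof -
  have "a = 0 \<and> b = 0" if ab: "(a, b) \<in> qc_code m g1 g2" "(a, b) \<in> qc_code m f1 f2" for a b
  proof -
    obtain r s where r: "a = (r * g1) mod xm1 m" "b = (r * g2) mod xm1 m"
      and s: "a = (s * f1) mod xm1 m" "b = (s * f2) mod xm1 m"
      using ab unfolding mem_qc_code_iff by blast
    then have "[r * g1 = s * f1] (mod xm1 m)" "[r * g2 = s * f2] (mod xm1 m)"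
      by (simp_all add: cong_def)
    then have cramer: "[r * (g1 * f2 - g2 * f1) = 0] (mod xm1 m)"
      by (rule cramer_cong)
    have "[r * 1 = r * ((g1 * f2 - g2 * f1) * u)] (mod xm1 m)"
      using cong_sym[OF assms] by (rule cong_scalar_left)
    also have "r * ((g1 * f2 - g2 * f1) * u) = r * (g1 * f2 - g2 * f1) * u"
      by (simp add: mult.assoc)
    also have "[\<dots> = 0 * u] (mod xm1 m)"
      using cramer by (rule cong_scalar_right)
    finally have "[r = 0] (mod xm1 m)"
      by simp
    with r show ?thesis
      by (simp add: cong_def mod_mult_left_eq[of r, symmetric])
  qed
  moreover have "(0, 0) \<in> qc_code m h1 h2" for h1 h2 :: "'a poly"
    by (auto simp: mem_qc_code_iff intro: exI[of _ 0])
  ultimately show ?thesis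
    by auto
qed

lemma det_invertible_if_code_sum_eq_ambient:
  assumes "code_sum (qc_code m g1 g2) (qc_code m f1 f2) = ambient m"
  shows "\<exists>x. [(g1 * f2 - g2 * f1) * x = 1] (mod xm1 m)"
proof -
  have "(1 mod xm1 m, 0) \<in> code_sum (qc_code m g1 g2) (qc_code m f1 f2)"
    and "(0, 1 mod xm1 m) \<in> code_sum (qc_code m g1 g2) (qc_code m f1 f2)"
    unfolding assms by (simp_all add: mem_ambient_iff)
  then obtain r s r' s' where
      "1 mod xm1 m = (r * g1 + s * f1) mod xm1 m" "0 = (r * g2 + s * f2) mod xm1 m"
      "0 = (r' * g1 + s' * f1) mod xm1 m" "1 mod xm1 m = (r' * g2 + s' * f2) mod xm1 m"
    unfolding mem_code_sum_qc_code_iff by blast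
  then have "[r * g1 + s * f1 = 1] (mod xm1 m)" "[r * g2 + s * f2 = 0] (mod xm1 m)"
      "[r' * g1 + s' * f1 = 0] (mod xm1 m)" "[r' * g2 + s' * f2 = 1] (mod xm1 m)"
    by (simp_all add: cong_def)
  then have "[(r * g1 + s * f1) * (r' * g2 + s' * f2) - (r * g2 + s * f2) * (r' * g1 + s' * f1)
      = 1 * 1 - 0 * 0] (mod xm1 m)"
    by (intro cong_diff cong_mult)
  then have "[(g1 * f2 - g2 * f1) * (r * s' - s * r') = 1] (mod xm1 m)"
    by (simp add: det2_mult[symmetric] mult.commute)
  then show ?thesis ..
qed

lemma code_sum_eq_ambient_if_det_invertible:
  assumes "[(g1 * f2 - g2 * f1) * u = 1] (mod xm1 m)"
  shows "code_sum (qc_code m g1 g2) (qc_code m f1 f2) = ambient m"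
proof -
  have "(c0, c1) \<in> code_sum (qc_code m g1 g2) (qc_code m f1 f2)"
    if "c0 mod xm1 m = c0" "c1 mod xm1 m = c1" for c0 c1
  proof -
    define r where "r = u * (c0 * f2 - c1 * f1)"
    define s where "s = u * (g1 * c1 - g2 * c0)"
    have "r * g1 + s * f1 = ((g1 * f2 - g2 * f1) * u) * c0"
      and "r * g2 + s * f2 = ((g1 * f2 - g2 * f1) * u) * c1"
      by (simp_all add: r_def s_def algebra_simps)
    moreover have "[((g1 * f2 - g2 * f1) * u) * c = c] (mod xm1 m)" for c
      using cong_scalar_right[OF assms, of c] by simp
    ultimately have "c0 = (r * g1 + s * f1) mod xm1 m" "c1 = (r * g2 + s * f2) mod xm1 m"
      using that by (simp_all add: cong_def)
    then show ?thesis
      by (auto simp: mem_code_sum_qc_code_iff)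
  qed
  then show ?thesis
    by (auto simp: mem_ambient_iff mem_code_sum_qc_code_iff)
qed

lemma is_LCP_qc_code_iff:
  "is_LCP m (qc_code m g1 g2) (qc_code m f1 f2) \<longleftrightarrow> coprime (xm1 m) (g1 * f2 - g2 * f1)"
proof -
  have "is_LCP m (qc_code m g1 g2) (qc_code m f1 f2) \<longleftrightarrow>
      (\<exists>x. [(g1 * f2 - g2 * f1) * x = 1] (mod xm1 m))"
    using qc_code_inter_trivial code_sum_eq_ambient_if_det_invertible
      det_invertible_if_code_sum_eq_ambient
    by (metis is_LCP_iff)
  also have "\<dots> \<longleftrightarrow> coprime (g1 * f2 - g2 * f1) (xm1 m)"
    by (rule coprime_iff_invertible[symmetric])
  finally show ?thesis
    using coprime_commute by blast
qed

theorem theorem4p3: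
  fixes g11 g12 f11 f12 :: "'a::{field, finite} poly" and m :: nat
  assumes "m > 0"
    and "coprime m (card (UNIV :: 'a set))"
    and "g11 dvd xm1 m"
    and "f11 dvd xm1 m"
  shows "is_LCP m (qc_code m g11 g12) (qc_code m f11 f12) \<longleftrightarrow>
           (coprime g11 g12 \<and> coprime f11 f12 \<and>
            coprime (xm1 m) (g11 * f12 - g12 * f11))"
  using is_LCP_qc_code_iff coprime_rows_if_coprime_det assms(3,4) by blast

end
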